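(* For every non-empty index $\mathbf k$, \[\zeta^{s,t,\star}_{\widehat{\mathcal{RS}}}(\mathbf k)=\frac{1}{2\pi i}\Bigl\langle\Phi_{\mathcal{RS}}(X_\infty,X_1),\ (1-e_0s)^{-1}(e_1-e_0)\,\omega(\mathbf k)\,(e_1-e_0)(1-e_0t)^{-1}\Bigr\rangle,\] where $X_\infty=-X_0-X_1$.
   Context: $s,t$ commuting indeterminates, $X_0,X_1$ noncommuting variables. An index is a finite tuple $\mathbf{k}=(k_1,\dots,k_r)$ of positive integers, $\mathrm{dep}(\mathbf k)=r$, $\mathrm{wt}(\mathbf k)=\sum k_i$. $\mathfrak H=\mathbb Q\langle e_0,e_1\rangle$, $e_{\mathbf{k}}=e_1e_0^{k_1-1}\cdots e_1e_0^{k_r-1}$; for non-empty $\mathbf k$, $\omega(\mathbf k)$ is defined by $e_1\omega(\mathbf k)=e_{\mathbf k}$. $Z^{ш}:(\mathfrak H,ш)\to\mathbb R$ is the shuffle-algebra homomorphism with $Z^{ш}(e_{\mathbf k})=(-1)^{\mathrm{dep}}\zeta(\mathbf k)$ for admissible $\mathbf k$ (empty or $k_r\ge2$) and $Z^{ш}(e_0)=Z^{ш}(e_1)=0$. $\Phi_{\mathrm{KZ}}(X_0,X_1)=\sum_{n\ge0}\sum_{a_i\in\{0,1\}}Z^{ш}(e_{a_1}\cdots e_{a_n})X_{a_n}\cdots X_{a_1}$; $\Phi_{\mathcal{RS}}(X_0,X_1)=\exp(\pi iX_0/2)\Phi_{\mathrm{KZ}}(X_1,X_0)\exp(2\pi iX_1)\Phi_{\mathrm{KZ}}(X_0,X_1)\exp(\pi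 iX_0/2)$, and $\Phi_{\mathcal{RS}}(A,B)$ denotes substitution $X_0\mapsto A,X_1\mapsto B$. Pairing: for $\Phi=\sum_Wc_WW$ over words $W$ in $X_0,X_1$, $\langle\Phi,e_{a_1}\cdots e_{a_n}\rangle=c_{X_{a_1}\cdots X_{a_n}}$, extended linearly and coefficientwise to $\mathfrak H[[s,t]]$. For non-empty $\mathbf k$, $\zeta^{s,t}_{\widehat{\mathcal{RS}}}(\mathbf k)=\frac{(-1)^{\mathrm{wt}(\mathbf k)+\mathrm{dep}(\mathbf k)}}{2\pi i}\langle\Phi_{\mathcal{RS}}(X_0,X_1),(1+e_0s)^{-1}e_1\omega(\mathbf k)e_1(1+e_0t)^{-1}\rangle$. $\mathbf l\preceq\mathbf k$ means $\mathbf l$ is obtained from $(k_1\circ\cdots\circ k_r)$ by replacing each $\circ$ by a comma or a plus sign, and $\zeta^{s,t,\star}_{\widehat{\mathcal{RS}}}(\mathbf k)=\sum_{\mathbf l\preceq\mathbf k}\zeta^{s,t}_{\widehat{\mathcal{RS}}}(\mathbf l)$. *)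

theory Defs
  imports "HOL-Analysis.Analysis"
begin

(* L0 stands for X_0 / e_0, L1 for X_1 / e_1 *)
datatype letter = L0 | L1

type_synonym word = "letter list"

(* A noncommutative formal power series in X_0, X_1 (or an element of H, when finitely
   supported) is given by its coefficient function on words. *)
type_synonym ncs = "word \<Rightarrow> complex"

definition ncs_zero :: ncs where "ncs_zero = (\<lambda>w. 0)"
definition ncs_one :: ncs where "ncs_one = (\<lambda>w. if w = [] then 1 else 0)"
definition ncs_mono :: "word \<Rightarrow> ncs" where "ncs_mono u = (\<lambda>w. if w = u then 1 else 0)"
definition ncs_var :: "letter \<Rightarrow> ncs" where "ncs_var a = ncs_mono [a]"
definition ncs_add :: "ncs \<Rightarrow> ncs \<Rightarrow> ncs" where "ncs_add f g = (\<lambda>w. f w + g w)"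
definition ncs_smult :: "complex \<Rightarrow> ncs \<Rightarrow> ncs" where "ncs_smult c f = (\<lambda>w. c * f w)"

definition ncs_mult :: "ncs \<Rightarrow> ncs \<Rightarrow> ncs" where
  "ncs_mult f g = (\<lambda>w. \<Sum>i\<le>length w. f (take i w) * g (drop i w))"

definition ncs_prod :: "ncs list \<Rightarrow> ncs" where
  "ncs_prod fs = foldr ncs_mult fs ncs_one"

definition ncs_exp :: "complex \<Rightarrow> letter \<Rightarrow> ncs" where
  "ncs_exp c a = (\<lambda>w. if w = replicate (length w) a
                        then c ^ length w / of_nat (fact (length w)) else 0)"

(* Substitution Phi(S L0, S L1), X_a \<mapsto> S a; meaningful for series S a with
   zero constant term (only words u of length \<le> length w contribute). *)
definition ncs_subst :: "ncs \<Rightarrow> (letter \<Rightarrow> ncs) \<Rightarrow> ncs" where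
  "ncs_subst \<Phi> S = (\<lambda>w. \<Sum>n\<le>length w.
      sum_list (map (\<lambda>u. \<Phi> u * ncs_prod (map S u) w) (List.n_lists n [L0, L1])))"

definition mzv :: "nat list \<Rightarrow> real" where
  "mzv k = (\<Sum>\<^sub>\<infinity> ns \<in> {ns :: nat list. length ns = length k \<and> sorted_wrt (<) ns \<and> (\<forall>n\<in>set ns. 0 < n)}.
              \<Prod>i<length k. 1 / real (ns ! i) ^ (k ! i))"

definition is_index :: "nat list \<Rightarrow> bool" where
  "is_index k \<longleftrightarrow> (\<forall>x\<in>set k. 0 < x)"

definition admissible :: "nat list \<Rightarrow> bool" where
  "admissible k \<longleftrightarrow> is_index k \<and> (k = [] \<or> 2 \<le> last k)"

definition e_idx :: "nat list \<Rightarrow> word" where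
  "e_idx k = concat (map (\<lambda>ki. L1 # replicate (ki - 1) L0) k)"

(* omega(k), defined by e_1 omega(k) = e_k (k non-empty) *)
definition omega :: "nat list \<Rightarrow> word" where
  "omega k = tl (e_idx k)"

fun shuffle_list :: "'a list \<Rightarrow> 'a list \<Rightarrow> 'a list list" where
  "shuffle_list [] ys = [ys]"
| "shuffle_list xs [] = [xs]"
| "shuffle_list (x # xs) (y # ys) =
     map ((#) x) (shuffle_list xs (y # ys)) @ map ((#) y) (shuffle_list (x # xs) ys)"

(* Z^sh as a linear map on H, given by its values on words: shuffle homomorphism
   with prescribed values on admissible words and Z(e_0) = Z(e_1) = 0. *)
definition Zsh_spec :: "(word \<Rightarrow> real) \<Rightarrow> bool" where
  "Zsh_spec Z \<longleftrightarrow>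
     (\<forall>u v. Z u * Z v = sum_list (map Z (shuffle_list u v))) \<and>
     Z [] = 1 \<and> Z [L0] = 0 \<and> Z [L1] = 0 \<and>
     (\<forall>k. admissible k \<longrightarrow> Z (e_idx k) = (-1) ^ length k * mzv k)"

definition Zsh :: "word \<Rightarrow> real" where
  "Zsh = (THE Z. Zsh_spec Z)"

(* Phi_KZ(X_0,X_1) = sum Z(e_{a_1}...e_{a_n}) X_{a_n}...X_{a_1} *)
definition PhiKZ :: ncs where
  "PhiKZ = (\<lambda>w. complex_of_real (Zsh (rev w)))"

definition PhiRS :: ncs where
  "PhiRS = ncs_prod
     [ ncs_exp (pi * \<i> / 2) L0,
       ncs_subst PhiKZ (\<lambda>a. if a = L0 then ncs_var L1 else ncs_var L0),
       ncs_exp (2 * pi * \<i>) L1,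
       PhiKZ,
       ncs_exp (pi * \<i> / 2) L0 ]"

definition PhiRS_at :: "ncs \<Rightarrow> ncs \<Rightarrow> ncs" where
  "PhiRS_at A B = ncs_subst PhiRS (\<lambda>a. if a = L0 then A else B)"

definition Xinf :: ncs where
  "Xinf = ncs_smult (-1) (ncs_add (ncs_var L0) (ncs_var L1))"

(* element of H[[s,t]]: coefficient of s^m t^n is F m n \<in> H *)
type_synonym hst = "nat \<Rightarrow> nat \<Rightarrow> ncs"

definition hst_const :: "ncs \<Rightarrow> hst" where
  "hst_const h = (\<lambda>m n. if m = 0 \<and> n = 0 then h else ncs_zero)"

definition hst_mult :: "hst \<Rightarrow> hst \<Rightarrow> hst" where
  "hst_mult F G = (\<lambda>m n w. \<Sum>i\<le>m. \<Sum>j\<le>n. ncs_mult (F i j) (G (m - i) (n - j)) w)"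

(* pairing <Phi, h> for h \<in> H (finitely supported) *)
definition pair :: "ncs \<Rightarrow> ncs \<Rightarrow> complex" where
  "pair \<Phi> h = (\<Sum>w\<in>{w. h w \<noteq> 0}. \<Phi> w * h w)"

definition pair_st :: "ncs \<Rightarrow> hst \<Rightarrow> nat \<Rightarrow> nat \<Rightarrow> complex" where
  "pair_st \<Phi> F = (\<lambda>m n. pair \<Phi> (F m n))"

(* (1 + c e_0 s)^(-1) = sum_m (-c)^m e_0^m s^m  and the analogue in t *)
definition inv_s :: "complex \<Rightarrow> hst" where
  "inv_s c = (\<lambda>m n. if n = 0 then ncs_smult ((- c) ^ m) (ncs_mono (replicate m L0)) else ncs_zero)"

definition inv_t :: "complex \<Rightarrow> hst" where
  "inv_t c = (\<lambda>m n. if m = 0 then ncs_smult ((- c) ^ n) (ncs_mono (replicate n L0)) else ncs_zero)"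

definition zeta_RS_st :: "nat list \<Rightarrow> nat \<Rightarrow> nat \<Rightarrow> complex" where
  "zeta_RS_st k = (\<lambda>m n.
     (-1) ^ (sum_list k + length k) / (2 * pi * \<i>) *
     pair_st PhiRS
       (hst_mult (hst_mult (inv_s 1) (hst_const (ncs_mono ([L1] @ omega k @ [L1])))) (inv_t 1)) m n)"

(* all l \<preceq> k : replace each separator by a comma or a plus sign *)
fun coarsenings :: "nat list \<Rightarrow> nat list list" where
  "coarsenings [] = [[]]"
| "coarsenings [a] = [[a]]"
| "coarsenings (a # b # ks) =
     map ((#) a) (coarsenings (b # ks)) @ coarsenings ((a + b) # ks)"

definition zeta_RS_star :: "nat list \<Rightarrow> nat \<Rightarrow> nat \<Rightarrow> complex" where
  "zeta_RS_star k = (\<lambda>m n. sum_list (map (\<lambda>l. zeta_RS_st l m n) (coarsenings k)))"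

end

theory Submission
  imports Defs
begin

text \<open>
  The substitution X0 \<mapsto> X\<infinity> = -X0 - X1, X1 \<mapsto> X1 is dual, under the pairing, to the
  algebra endomorphism \<sigma> of H with \<sigma>(e0) = -e0 and \<sigma>(e1) = e1 - e0. As \<sigma>(e1 - e0) = e1, the
  right-hand side pairs \<Phi>_RS with (-1)^(m+n) e0^m e1 \<sigma>(\<omega>(k)) e1 e0^n. In
  \<omega>(k) = e0^(k1-1) e1 e0^(k2-1) \<dots> e1 e0^(kr-1) every e1 becomes e1 - e0: keeping e1 is a
  comma, taking -e0 merges two neighbouring blocks, i.e. is a plus sign. Hence \<sigma>(\<omega>(k)) is
  the sum of (-1)^(wt(l) + dep(l)) \<omega>(l) over all l \<preceq> k, with exactly the signs of the
  \<zeta>^(s,t)(l).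
\<close>

lemma ncs_mult_zero_left [simp]: "ncs_mult ncs_zero g = ncs_zero"
  by (simp add: ncs_mult_def ncs_zero_def)

lemma ncs_mult_zero_right [simp]: "ncs_mult f ncs_zero = ncs_zero"
  by (simp add: ncs_mult_def ncs_zero_def)

lemma ncs_smult_zero [simp]: "ncs_smult c ncs_zero = ncs_zero"
  by (simp add: ncs_smult_def ncs_zero_def)

lemma ncs_smult_smult [simp]: "ncs_smult a (ncs_smult b f) = ncs_smult (a * b) f"
  by (simp add: ncs_smult_def mult.assoc)

lemma ncs_mult_one_right [simp]: "ncs_mult f ncs_one = f"
proof
  fix w
  have "ncs_mult f ncs_one w = (\<Sum>i\<le>length w. if i = length w then f w else 0)"
    unfolding ncs_mult_def ncs_one_def by (rule sum.cong) auto
  then show "ncs_mult f ncs_one w = f w" by simp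
qed

lemma ncs_mult_mono_left:
  "ncs_mult (ncs_mono u) g w
    = (if length u \<le> length w \<and> take (length u) w = u then g (drop (length u) w) else 0)"
proof -
  have "ncs_mult (ncs_mono u) g w
      = (\<Sum>i\<le>length w. if i = length u then (if take i w = u then g (drop i w) else 0) else 0)"
    unfolding ncs_mult_def ncs_mono_def by (rule sum.cong) auto
  then show ?thesis
    by (simp add: sum.delta')
qed

lemma ncs_mult_mono [simp]: "ncs_mult (ncs_mono u) (ncs_mono v) = ncs_mono (u @ v)"
proof
  fix w
  have "(length u \<le> length w \<and> take (length u) w = u \<and> drop (length u) w = v) \<longleftrightarrow> w = u @ v"
    by (metis append_eq_conv_conj le_add1 length_append)
  then show "ncs_mult (ncs_mono u) (ncs_mono v) w = ncs_mono (u @ v) w"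
    unfolding ncs_mult_mono_left by (auto simp: ncs_mono_def)
qed

lemma ncs_mult_add_left: "ncs_mult (ncs_add f g) h = ncs_add (ncs_mult f h) (ncs_mult g h)"
  by (simp add: ncs_mult_def ncs_add_def distrib_right sum.distrib)

lemma ncs_mult_add_right: "ncs_mult f (ncs_add g h) = ncs_add (ncs_mult f g) (ncs_mult f h)"
  by (simp add: ncs_mult_def ncs_add_def distrib_left sum.distrib)

lemma ncs_mult_smult_left: "ncs_mult (ncs_smult c f) g = ncs_smult c (ncs_mult f g)"
  by (simp add: ncs_mult_def ncs_smult_def sum_distrib_left mult.assoc)

lemma ncs_mult_smult_right: "ncs_mult f (ncs_smult c g) = ncs_smult c (ncs_mult f g)"
  by (simp add: ncs_mult_def ncs_smult_def sum_distrib_left mult.left_commute)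

lemma ncs_mult_degree_one_left:
  assumes "\<And>v. length v \<noteq> 1 \<Longrightarrow> f v = 0"
  shows "ncs_mult f g [] = 0" and "ncs_mult f g (b # w) = f [b] * g w"
proof -
  show "ncs_mult f g [] = 0"
    by (simp add: ncs_mult_def assms)
  have "ncs_mult f g (b # w)
      = (\<Sum>i\<le>length (b # w). if i = 1 then f [b] * g w else 0)"
    unfolding ncs_mult_def by (rule sum.cong) (auto simp: assms)
  then show "ncs_mult f g (b # w) = f [b] * g w"
    using sum.delta[of "{..length (b # w)}" 1 "\<lambda>_. f [b] * g w"] by simp
qed

lemma ncs_prod_map_degree_one:
  assumes "\<And>a v. length v \<noteq> 1 \<Longrightarrow> S a v = 0"
  shows "ncs_prod (map S u) w
    = (if length u = length w then prod_list (map2 (\<lambda>a b. S a [b]) u w) else 0)"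
proof (induction u arbitrary: w)
  case Nil
  then show ?case by (simp add: ncs_prod_def ncs_one_def)
next
  case (Cons a u)
  then show ?case
    by (cases w) (simp_all add: ncs_prod_def ncs_mult_degree_one_left assms)
qed

lemma finite_support_mono: "finite {w. ncs_mono u w \<noteq> 0}"
  by (simp add: ncs_mono_def)

lemma finite_support_smult: "finite {w. f w \<noteq> 0} \<Longrightarrow> finite {w. ncs_smult c f w \<noteq> 0}"
  by (rule finite_subset[of _ "{w. f w \<noteq> 0}"]) (auto simp: ncs_smult_def)

lemma finite_support_add:
  "finite {w. f w \<noteq> 0} \<Longrightarrow> finite {w. g w \<noteq> 0} \<Longrightarrow> finite {w. ncs_add f g w \<noteq> 0}"
  by (rule finite_subset[of _ "{w. f w \<noteq> 0} \<union> {w. g w \<noteq> 0}"]) (auto simp: ncs_add_def)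

lemma pair_eq_sum:
  assumes "finite W" "{w. h w \<noteq> 0} \<subseteq> W"
  shows "pair \<Psi> h = (\<Sum>w\<in>W. \<Psi> w * h w)"
  unfolding pair_def by (rule sum.mono_neutral_left) (use assms in auto)

lemma pair_mono [simp]: "pair \<Psi> (ncs_mono u) = \<Psi> u"
  by (simp add: pair_eq_sum[of "{u}"] ncs_mono_def)

lemma pair_smult [simp]: "pair \<Psi> (ncs_smult c f) = c * pair \<Psi> f"
proof (cases "c = 0")
  case False
  then show ?thesis
    by (simp add: pair_def ncs_smult_def sum_distrib_left mult.left_commute)
qed (simp add: pair_def ncs_smult_def)

lemma pair_add:
  assumes "finite {w. f w \<noteq> 0}" "finite {w. g w \<noteq> 0}"
  shows "pair \<Psi> (ncs_add f g) = pair \<Psi> f + pair \<Psi> g"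
proof -
  let ?W = "{w. f w \<noteq> 0} \<union> {w. g w \<noteq> 0}"
  have "pair \<Psi> (ncs_add f g) = (\<Sum>w\<in>?W. \<Psi> w * f w + \<Psi> w * g w)"
    by (subst pair_eq_sum[of ?W]) (use assms in \<open>auto simp: ncs_add_def distrib_left\<close>)
  also have "\<dots> = pair \<Psi> f + pair \<Psi> g"
    by (simp add: sum.distrib pair_eq_sum[of ?W] assms)
  finally show ?thesis .
qed

lemma hst_mult_s_only_t_only:
  assumes "\<And>i j. j \<noteq> 0 \<Longrightarrow> F i j = ncs_zero" and "\<And>i j. i \<noteq> 0 \<Longrightarrow> G i j = ncs_zero"
  shows "hst_mult F G m n = ncs_mult (F m 0) (G 0 n)"
proof
  fix w
  have "ncs_mult (F i j) (G (m - i) (n - j)) w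
      = (if j = 0 then if i = m then ncs_mult (F m 0) (G 0 n) w else 0 else 0)"
    if "i \<le> m" for i j
    using assms that by (auto simp: ncs_zero_def[symmetric]) (simp_all add: ncs_zero_def)
  then show "hst_mult F G m n w = ncs_mult (F m 0) (G 0 n) w"
    by (simp add: hst_mult_def)
qed

lemma hst_mult_inv_const_inv:
  "hst_mult (hst_mult (inv_s c) (hst_const h)) (inv_t c) m n
     = ncs_smult ((- c) ^ (m + n))
         (ncs_mult (ncs_mult (ncs_mono (replicate m L0)) h) (ncs_mono (replicate n L0)))"
proof -
  have inner: "hst_mult (inv_s c) (hst_const h) i j
      = (if j = 0 then ncs_smult ((- c) ^ i) (ncs_mult (ncs_mono (replicate i L0)) h)
         else ncs_zero)" for i j
    by (subst hst_mult_s_only_t_only) (auto simp: inv_s_def hst_const_def ncs_mult_smult_left)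
  show ?thesis
    by (subst hst_mult_s_only_t_only)
       (auto simp: inner inv_t_def ncs_mult_smult_left ncs_mult_smult_right power_add
          mult.commute)
qed

definition Xinf_X1 :: "letter \<Rightarrow> ncs" where
  "Xinf_X1 = (\<lambda>a. if a = L0 then Xinf else ncs_var L1)"

lemma Xinf_X1_degree_one: "length v \<noteq> 1 \<Longrightarrow> Xinf_X1 a v = 0"
  by (auto simp: Xinf_X1_def Xinf_def ncs_smult_def ncs_add_def ncs_var_def ncs_mono_def)

lemma Xinf_X1_letter: "Xinf_X1 a [b] = (if a = L0 then -1 else if b = L1 then 1 else 0)"
  by (cases b) (auto simp: Xinf_X1_def Xinf_def ncs_smult_def ncs_add_def ncs_var_def ncs_mono_def)

text \<open>
  subst_Xinf_X1 \<Phi> w = \<langle>\<Phi>, \<sigma>(w)\<rangle> for the endomorphism \<sigma>(e0) = -e0, \<sigma>(e1) = e1 - e0 of H,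
  computed letter by letter; these are the coefficients of \<Phi>(X\<infinity>, X1) (see ncs_subst_Xinf_X1).
\<close>

fun subst_Xinf_X1 :: "ncs \<Rightarrow> word \<Rightarrow> complex" where
  "subst_Xinf_X1 \<Phi> [] = \<Phi> []"
| "subst_Xinf_X1 \<Phi> (L0 # w) = - subst_Xinf_X1 (\<lambda>u. \<Phi> (L0 # u)) w"
| "subst_Xinf_X1 \<Phi> (L1 # w)
     = subst_Xinf_X1 (\<lambda>u. \<Phi> (L1 # u)) w - subst_Xinf_X1 (\<lambda>u. \<Phi> (L0 # u)) w"

lemma subst_Xinf_X1_uminus: "subst_Xinf_X1 (\<lambda>u. - \<Phi> u) w = - subst_Xinf_X1 \<Phi> w"
proof (induction w arbitrary: \<Phi>)
  case (Cons a w)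
  then show ?case by (cases a) simp_all
qed simp

lemma subst_Xinf_X1_diff:
  "subst_Xinf_X1 (\<lambda>u. \<Phi> u - \<Psi> u) w = subst_Xinf_X1 \<Phi> w - subst_Xinf_X1 \<Psi> w"
proof (induction w arbitrary: \<Phi> \<Psi>)
  case (Cons a w)
  then show ?case by (cases a) simp_all
qed simp

lemma subst_Xinf_X1_cmult: "subst_Xinf_X1 (\<lambda>u. c * \<Phi> u) w = c * subst_Xinf_X1 \<Phi> w"
proof (induction w arbitrary: \<Phi>)
  case (Cons a w)
  then show ?case by (cases a) (simp_all add: right_diff_distrib)
qed simp

lemma subst_Xinf_X1_append:
  "subst_Xinf_X1 \<Phi> (u @ v) = subst_Xinf_X1 (\<lambda>x. subst_Xinf_X1 (\<lambda>y. \<Phi> (x @ y)) v) u"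
proof (induction u arbitrary: \<Phi>)
  case (Cons a u)
  then show ?case by (cases a) simp_all
qed simp

lemma subst_Xinf_X1_replicate_L0:
  "subst_Xinf_X1 \<Phi> (replicate n L0) = (-1) ^ n * \<Phi> (replicate n L0)"
  by (induction n arbitrary: \<Phi>) simp_all

text \<open>This is \<sigma>(e1 - e0) = e1.\<close>

lemma subst_Xinf_X1_L1_minus_L0:
  "subst_Xinf_X1 \<Phi> (u @ L1 # v) - subst_Xinf_X1 \<Phi> (u @ L0 # v)
     = subst_Xinf_X1 (\<lambda>x. subst_Xinf_X1 (\<lambda>y. \<Phi> (x @ L1 # y)) v) u"
  unfolding subst_Xinf_X1_append subst_Xinf_X1_diff[symmetric] by simp

lemma subst_Xinf_X1_sandwich:
  "(subst_Xinf_X1 \<Phi> (p @ L1 # w @ L1 # q) - subst_Xinf_X1 \<Phi> (p @ L0 # w @ L1 # q))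
     - (subst_Xinf_X1 \<Phi> (p @ L1 # w @ L0 # q) - subst_Xinf_X1 \<Phi> (p @ L0 # w @ L0 # q))
   = subst_Xinf_X1 (\<lambda>x. subst_Xinf_X1 (\<lambda>y. subst_Xinf_X1 (\<lambda>z. \<Phi> (x @ L1 # y @ L1 # z)) q) w) p"
proof -
  let ?\<Phi>' = "\<lambda>x y. \<Phi> (x @ L1 # y)"
  have "(subst_Xinf_X1 \<Phi> (p @ L1 # w @ L1 # q) - subst_Xinf_X1 \<Phi> (p @ L0 # w @ L1 # q))
      - (subst_Xinf_X1 \<Phi> (p @ L1 # w @ L0 # q) - subst_Xinf_X1 \<Phi> (p @ L0 # w @ L0 # q))
    = subst_Xinf_X1 (\<lambda>x. subst_Xinf_X1 (?\<Phi>' x) (w @ L1 # q)) p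
      - subst_Xinf_X1 (\<lambda>x. subst_Xinf_X1 (?\<Phi>' x) (w @ L0 # q)) p"
    by (simp only: subst_Xinf_X1_L1_minus_L0)
  also have "\<dots> = subst_Xinf_X1 (\<lambda>x. subst_Xinf_X1 (?\<Phi>' x) (w @ L1 # q)
      - subst_Xinf_X1 (?\<Phi>' x) (w @ L0 # q)) p"
    by (rule subst_Xinf_X1_diff[symmetric])
  also have "\<dots> = subst_Xinf_X1 (\<lambda>x. subst_Xinf_X1 (\<lambda>y. subst_Xinf_X1 (\<lambda>z. \<Phi> (x @ L1 # y @ L1 # z)) q) w) p"
    by (simp add: subst_Xinf_X1_L1_minus_L0)
  finally show ?thesis .
qed

lemma sum_list_concat: "sum_list (concat xss) = sum_list (map sum_list xss)"
  by (induction xss) simp_all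

lemma sum_n_lists_eq_subst_Xinf_X1:
  "(\<Sum>u\<leftarrow>List.n_lists (length w) [L0, L1]. \<Phi> u * prod_list (map2 (\<lambda>a b. Xinf_X1 a [b]) u w))
     = subst_Xinf_X1 \<Phi> w"
proof (induction w arbitrary: \<Phi>)
  case (Cons b w)
  have "(\<Sum>u\<leftarrow>List.n_lists (length (b # w)) [L0, L1].
          \<Phi> u * prod_list (map2 (\<lambda>a b. Xinf_X1 a [b]) u (b # w)))
      = (\<Sum>u\<leftarrow>List.n_lists (length w) [L0, L1].
           (\<Phi> (L0 # u) * Xinf_X1 L0 [b] + \<Phi> (L1 # u) * Xinf_X1 L1 [b])
           * prod_list (map2 (\<lambda>a b. Xinf_X1 a [b]) u w))"
    by (simp add: map_concat sum_list_concat comp_def algebra_simps)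
  also have "\<dots> = subst_Xinf_X1 (\<lambda>u. \<Phi> (L0 # u) * Xinf_X1 L0 [b] + \<Phi> (L1 # u) * Xinf_X1 L1 [b]) w"
    by (rule Cons.IH)
  also have "\<dots> = subst_Xinf_X1 \<Phi> (b # w)"
    by (cases b) (simp_all add: Xinf_X1_letter subst_Xinf_X1_uminus subst_Xinf_X1_diff[symmetric])
  finally show ?case .
qed simp

lemma ncs_subst_Xinf_X1: "ncs_subst \<Phi> Xinf_X1 = subst_Xinf_X1 \<Phi>"
proof
  fix w
  have "ncs_subst \<Phi> Xinf_X1 w
      = (\<Sum>n\<le>length w. if n = length w then subst_Xinf_X1 \<Phi> w else 0)"
    unfolding ncs_subst_def
  proof (rule sum.cong)
    fix n
    have "(\<Sum>u\<leftarrow>List.n_lists n [L0, L1]. \<Phi> u * ncs_prod (map Xinf_X1 u) w)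
        = (\<Sum>u\<leftarrow>List.n_lists n [L0, L1]. if n = length w
             then \<Phi> u * prod_list (map2 (\<lambda>a b. Xinf_X1 a [b]) u w) else 0)"
      by (rule arg_cong[where f = sum_list], rule map_cong)
         (simp_all add: ncs_prod_map_degree_one Xinf_X1_degree_one length_n_lists_elem)
    then show "(\<Sum>u\<leftarrow>List.n_lists n [L0, L1]. \<Phi> u * ncs_prod (map Xinf_X1 u) w)
        = (if n = length w then subst_Xinf_X1 \<Phi> w else 0)"
      by (simp add: sum_n_lists_eq_subst_Xinf_X1 sum_list_0)
  qed simp
  then show "ncs_subst \<Phi> Xinf_X1 w = subst_Xinf_X1 \<Phi> w"
    by simp
qed

lemma omega_singleton: "omega [a] = replicate (a - 1) L0"
  by (simp add: omega_def e_idx_def)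

lemma omega_Cons: "l \<noteq> [] \<Longrightarrow> omega (a # l) = replicate (a - 1) L0 @ L1 # omega l"
  by (cases l) (simp_all add: omega_def e_idx_def)

lemma omega_add_hd: "0 < y \<Longrightarrow> omega ((a + y) # l) = replicate a L0 @ omega (y # l)"
  by (simp add: omega_def e_idx_def replicate_add[symmetric])

lemma coarsenings_add_hd:
  "coarsenings ((c + x) # ks) = map (\<lambda>l. (c + hd l) # tl l) (coarsenings (x # ks))"
proof (induction ks arbitrary: x)
  case (Cons y ks)
  then show ?case
    using Cons.IH[of "x + y"] by (simp add: add.assoc comp_def)
qed simp

lemma coarsenings_hd: "l \<in> set (coarsenings (x # ks)) \<Longrightarrow> l \<noteq> [] \<and> x \<le> hd l"
proof (induction ks arbitrary: x l)
  case (Cons y ks)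
  then show ?case by force
qed simp

lemma sum_coarsenings_Cons_Cons:
  fixes f :: "nat list \<Rightarrow> complex"
  shows "(\<Sum>l\<leftarrow>coarsenings (a # b # ks). f l)
    = (\<Sum>l\<leftarrow>coarsenings (b # ks). f (a # l) + f ((a + hd l) # tl l))"
  using coarsenings_add_hd[of a b ks] by (simp add: sum_list_addf comp_def)

lemma subst_Xinf_X1_omega:
  assumes "is_index (a # ks)"
  shows "subst_Xinf_X1 g (omega (a # ks))
    = (\<Sum>l\<leftarrow>coarsenings (a # ks). (-1) ^ (sum_list l + length l) * g (omega l))"
  using assms
proof (induction ks arbitrary: a g)
  case Nil
  then obtain a' where "a = Suc a'"
    by (cases a) (auto simp: is_index_def)
  then show ?case
    by (simp add: omega_singleton subst_Xinf_X1_replicate_L0)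
next
  case (Cons b ks)
  obtain a' where a: "a = Suc a'"
    using Cons.prems by (cases a) (auto simp: is_index_def)
  have index: "is_index (b # ks)" and "0 < b"
    using Cons.prems by (auto simp: is_index_def)
  let ?r = "replicate a' L0"
  have "subst_Xinf_X1 g (omega (a # b # ks))
      = (-1) ^ a' * (subst_Xinf_X1 (\<lambda>u. g (?r @ L1 # u)) (omega (b # ks))
                    - subst_Xinf_X1 (\<lambda>u. g (replicate a L0 @ u)) (omega (b # ks)))"
    by (simp add: a omega_Cons subst_Xinf_X1_append subst_Xinf_X1_replicate_L0
        replicate_append_same[symmetric])
  also have "\<dots> = (-1) ^ a' * (\<Sum>l\<leftarrow>coarsenings (b # ks).
      (-1) ^ (sum_list l + length l) * g (?r @ L1 # omega l)
      - (-1) ^ (sum_list l + length l) * g (replicate a L0 @ omega l))"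
    by (simp add: Cons.IH[OF index] sum_list_subtractf)
  also have "\<dots> = (\<Sum>l\<leftarrow>coarsenings (b # ks).
      (-1) ^ (sum_list (a # l) + length (a # l)) * g (omega (a # l))
      + (-1) ^ (sum_list ((a + hd l) # tl l) + length ((a + hd l) # tl l))
          * g (omega ((a + hd l) # tl l)))"
    unfolding sum_list_const_mult[symmetric]
  proof (rule arg_cong[where f = sum_list], rule map_cong[OF refl])
    fix l
    assume "l \<in> set (coarsenings (b # ks))"
    with coarsenings_hd have "l \<noteq> [] \<and> b \<le> hd l" .
    then obtain y l' where l: "l = y # l'" and "0 < y"
      using \<open>0 < b\<close> by (cases l) auto
    then show "(-1) ^ a' * ((-1) ^ (sum_list l + length l) * g (?r @ L1 # omega l)
        - (-1) ^ (sum_list l + length l) * g (replicate a L0 @ omega l))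
      = (-1) ^ (sum_list (a # l) + length (a # l)) * g (omega (a # l))
        + (-1) ^ (sum_list ((a + hd l) # tl l) + length ((a + hd l) # tl l))
          * g (omega ((a + hd l) # tl l))"
      using omega_add_hd[OF \<open>0 < y\<close>, of a l'] by (simp add: a omega_Cons power_add algebra_simps)
  qed
  finally show ?case
    by (simp only: sum_coarsenings_Cons_Cons)
qed

lemma zeta_RS_st_eq_PhiRS:
  "zeta_RS_st l m n = 1 / (2 * pi * \<i>) * ((-1) ^ (m + n) * ((-1) ^ (sum_list l + length l)
     * PhiRS (replicate m L0 @ L1 # omega l @ L1 # replicate n L0)))"
  by (simp add: zeta_RS_st_def pair_st_def hst_mult_inv_const_inv)

lemma pair_sandwich:
  "pair \<Psi> (ncs_mult (ncs_mult (ncs_mono p)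
       (ncs_prod [ncs_add (ncs_var L1) (ncs_smult (-1) (ncs_var L0)), ncs_mono w,
                  ncs_add (ncs_var L1) (ncs_smult (-1) (ncs_var L0))]))
     (ncs_mono q))
   = (\<Psi> (p @ L1 # w @ L1 # q) - \<Psi> (p @ L0 # w @ L1 # q))
     - (\<Psi> (p @ L1 # w @ L0 # q) - \<Psi> (p @ L0 # w @ L0 # q))"
  by (simp add: ncs_prod_def ncs_var_def ncs_mult_add_left ncs_mult_add_right
      ncs_mult_smult_left ncs_mult_smult_right pair_add finite_support_mono finite_support_smult
      finite_support_add)

lemma pair_st_Xinf_X1_sandwich:
  "pair_st (ncs_subst \<Phi> Xinf_X1)
     (hst_mult
        (hst_mult (inv_s (-1))
           (hst_const
              (ncs_prod [ncs_add (ncs_var L1) (ncs_smult (-1) (ncs_var L0)), ncs_mono w,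
                         ncs_add (ncs_var L1) (ncs_smult (-1) (ncs_var L0))])))
        (inv_t (-1))) m n
   = (-1) ^ (m + n) * subst_Xinf_X1 (\<lambda>u. \<Phi> (replicate m L0 @ L1 # u @ L1 # replicate n L0)) w"
  by (simp add: pair_st_def hst_mult_inv_const_inv ncs_subst_Xinf_X1 pair_sandwich
      subst_Xinf_X1_sandwich subst_Xinf_X1_replicate_L0 subst_Xinf_X1_cmult power_add)

theorem proposition5p4:
  fixes k :: "nat list"
  assumes "k \<noteq> []" and "is_index k"
  shows "zeta_RS_star k =
    (\<lambda>m n. 1 / (2 * pi * \<i>) *
       pair_st (PhiRS_at Xinf (ncs_var L1))
         (hst_mult
            (hst_mult (inv_s (-1))
               (hst_const
                  (ncs_prod [ ncs_add (ncs_var L1) (ncs_smult (-1) (ncs_var L0)),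
                              ncs_mono (omega k),
                              ncs_add (ncs_var L1) (ncs_smult (-1) (ncs_var L0)) ])))
            (inv_t (-1))) m n)"
proof -
  obtain a ks where k: "k = a # ks"
    using assms(1) by (cases k) auto
  have PhiRS_at_Xinf_X1: "PhiRS_at Xinf (ncs_var L1) = ncs_subst PhiRS Xinf_X1"
    by (simp add: PhiRS_at_def Xinf_X1_def)
  show ?thesis
    unfolding PhiRS_at_Xinf_X1 zeta_RS_star_def zeta_RS_st_eq_PhiRS sum_list_const_mult
    using subst_Xinf_X1_omega[of a ks] assms(2) k by (simp add: pair_st_Xinf_X1_sandwich)
qed

end
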